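(* Let $X\subset\mathbb{R}^N$ be a bounded open set, $\Theta$ a uniformly continuous proper elliptic map on $X$, and $u\in\mathrm{USC}(\overline{X})$ be $\Theta$-subharmonic in $X$ with $|u|\le M$ on $X$ for some $M>0$. Extend $u$ by $-\infty$ outside $X$ and for $\varepsilon>0$ define $u^\varepsilon(x):=\sup_{z\in\mathbb{R}^N}\{u(x-z)-\frac{1}{\varepsilon}|z|^2\}$ for $x\in X$. Let $\omega:=2+\sup_{x\in X}|x|^2$. Then for every $\eta>0$ there exists $\bar\varepsilon=\bar\varepsilon(\eta)>0$ such that for every $\varepsilon\in(0,\bar\varepsilon]$ the function $x\mapsto u^\varepsilon(x)+\eta(|x|^2-\omega)$ is $\Theta$-subharmonic in $X_\delta:=\{x\in X:\mathrm{dist}(x,\partial X)>\delta\}$, where $\delta:=\sqrt{2\varepsilon M}$.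
   Context: $\mathcal{S}(N)$: real symmetric $N\times N$ matrices with the usual partial order; $\lambda_i(A)$ eigenvalues. $\mathcal{Q}:=\{(s,P): s\le0,\ P\ge0\}$. A proper elliptic map $\Theta$ on $X$ assigns to each $x$ a closed, nonempty set $\Theta(x)\subsetneq\mathbb{R}\times\mathcal{S}(N)$ with $\Theta(x)+\mathcal{Q}\subset\Theta(x)$. $J^+_{x_0}w:=\{(\varphi(x_0),D^2\varphi(x_0)):\varphi$ is $C^2$ near $x_0$, $w\le\varphi$ near $x_0$, $w(x_0)=\varphi(x_0)\}$; $w\in\mathrm{USC}(U)$ is $\Theta$-subharmonic in an open $U\subset X$ if $J^+_{x_0}w\subset\Theta(x_0)$ for all $x_0\in U$. Using the norm $\|(r,A)\|=\max\{|r|,\max_i|\lambda_i(A)|\}$ and the associated Hausdorff distance $d_{\mathcal H}$ on closed subsets (possibly $+\infty$), $\Theta$ is uniformly continuous on $X$ if for every $\eta>0$ there is $\delta>0$ with $d_{\mathcal H}(\Theta(x),\Theta(y))<\eta$ whenever $x,y\in X$, $|x-y|<\delta$. *)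

theory Defs
  imports "HOL-Analysis.Analysis"
begin

definition sym_mat :: "real^'n^'n \<Rightarrow> bool" where
  "sym_mat A \<longleftrightarrow> transpose A = A"

definition mat_le :: "real^'n^'n \<Rightarrow> real^'n^'n \<Rightarrow> bool" where
  "mat_le A B \<longleftrightarrow> (\<forall>v. v \<bullet> (A *v v) \<le> v \<bullet> (B *v v))"

definition eigenvalues :: "real^'n^'n \<Rightarrow> real set" where
  "eigenvalues A = {l. \<exists>v. v \<noteq> 0 \<and> A *v v = l *\<^sub>R v}"

definition eig_norm :: "real^'n^'n \<Rightarrow> real" where
  "eig_norm A = Max ((\<lambda>l. \<bar>l\<bar>) ` eigenvalues A)"

definition jet_norm :: "real \<times> (real^'n^'n) \<Rightarrow> real" where
  "jet_norm p = max \<bar>fst p\<bar> (eig_norm (snd p))"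

definition hausdorff_dist :: "(real \<times> (real^'n^'n)) set \<Rightarrow> (real \<times> (real^'n^'n)) set \<Rightarrow> ereal" where
  "hausdorff_dist S T =
     max (SUP a\<in>S. INF b\<in>T. ereal (jet_norm (a - b)))
         (SUP b\<in>T. INF a\<in>S. ereal (jet_norm (a - b)))"

definition Qcone :: "(real \<times> (real^'n^'n)) set" where
  "Qcone = {(s, P). s \<le> 0 \<and> sym_mat P \<and> mat_le 0 P}"

definition proper_elliptic_map :: "(real^'n) set \<Rightarrow> (real^'n \<Rightarrow> (real \<times> (real^'n^'n)) set) \<Rightarrow> bool" where
  "proper_elliptic_map X Theta \<longleftrightarrow>
     (\<forall>x\<in>X. closed (Theta x) \<and> Theta x \<noteq> {}
        \<and> Theta x \<subseteq> {(r, A). sym_mat A} \<and> Theta x \<noteq> {(r, A). sym_mat A}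
        \<and> (\<forall>p\<in>Theta x. \<forall>q\<in>Qcone. p + q \<in> Theta x))"

definition unif_cont_elliptic_map :: "(real^'n) set \<Rightarrow> (real^'n \<Rightarrow> (real \<times> (real^'n^'n)) set) \<Rightarrow> bool" where
  "unif_cont_elliptic_map X Theta \<longleftrightarrow>
     (\<forall>\<eta>>0. \<exists>\<delta>>0. \<forall>x\<in>X. \<forall>y\<in>X. dist x y < \<delta> \<longrightarrow> hausdorff_dist (Theta x) (Theta y) < ereal \<eta>)"

definition usc_on :: "(real^'n) set \<Rightarrow> (real^'n \<Rightarrow> real) \<Rightarrow> bool" where
  "usc_on S f \<longleftrightarrow> (\<forall>x\<in>S. \<forall>a. f x < a \<longrightarrow> (\<exists>e>0. \<forall>y\<in>S. dist y x < e \<longrightarrow> f y < a))"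

definition superjet :: "(real^'n \<Rightarrow> real) \<Rightarrow> real^'n \<Rightarrow> (real \<times> (real^'n^'n)) set" where
  "superjet w x0 = {(phi x0, H x0) | phi g H. \<exists>e>0.
      (\<forall>y\<in>ball x0 e. (phi has_derivative (\<lambda>h. g y \<bullet> h)) (at y)
                     \<and> (g has_derivative (\<lambda>h. H y *v h)) (at y))
      \<and> continuous_on (ball x0 e) H
      \<and> (\<forall>y\<in>ball x0 e. w y \<le> phi y) \<and> w x0 = phi x0}"

definition subharmonic :: "(real^'n \<Rightarrow> (real \<times> (real^'n^'n)) set) \<Rightarrow> (real^'n) set \<Rightarrow> (real^'n \<Rightarrow> real) \<Rightarrow> bool" where
  "subharmonic Theta U w \<longleftrightarrow> usc_on U w \<and> (\<forall>x0\<in>U. superjet w x0 \<subseteq> Theta x0)"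

text \<open>Sup-convolution, with u extended by -infinity outside X:
  u^eps(x) = sup_z {u(x-z) - |z|^2/eps} = sup_{y\<in>X} {u(y) - |x-y|^2/eps}.\<close>
definition supconv :: "(real^'n) set \<Rightarrow> (real^'n \<Rightarrow> real) \<Rightarrow> real \<Rightarrow> real^'n \<Rightarrow> real" where
  "supconv X u eps x = Sup {u y - (norm (x - y))\<^sup>2 / eps | y. y \<in> X}"

end

theory Submission
  imports Defs
begin

(* At a point x0 of X_delta the supremum defining u^eps is attained at some y0 with
   |x0 - y0| <= delta: u is usc, and outside that ball the penalty |x0 - y|^2/eps exceeds 2M.
   Translating a test function that touches u^eps from above at x0 by x0 - y0 gives one that
   touches u from above at y0 with the same Hessian, so the second-order part of every superjet
   of u^eps at x0 lies in Theta(y0). Uniform continuity moves it to within eta of Theta(x0), and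
   the term eta (|x|^2 - omega), which lowers the value by at least eta and adds 2 eta I to the
   Hessian, absorbs this error through the monotonicity Theta + Q \<subseteq> Theta. *)

section \<open>Symmetric matrices\<close>

lemma sym_mat_inner_commute:
  fixes C :: "real^'n^'n"
  assumes "sym_mat C"
  shows "(C *v x) \<bullet> y = x \<bullet> (C *v y)"
proof -
  from assms have "x v* C = C *v x"
    by (metis sym_mat_def vector_transpose_matrix)
  then show ?thesis by (metis dot_lmul_matrix)
qed

lemma sym_mat_add: "sym_mat A \<Longrightarrow> sym_mat B \<Longrightarrow> sym_mat (A + B)"
  unfolding sym_mat_def by (simp add: transpose_def vec_eq_iff)

lemma sym_mat_diff: "sym_mat A \<Longrightarrow> sym_mat B \<Longrightarrow> sym_mat (A - B)"
  unfolding sym_mat_def by (simp add: transpose_def vec_eq_iff)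

lemma sym_mat_scaled_id: "sym_mat (c *\<^sub>R mat 1)"
  unfolding sym_mat_def by (simp add: transpose_scalar)

lemma eigenvectors_orthogonal:
  fixes C :: "real^'n^'n"
  assumes "sym_mat C" "C *v v = a *\<^sub>R v" "C *v w = b *\<^sub>R w" "a \<noteq> b"
  shows "v \<bullet> w = 0"
proof -
  have "a * (v \<bullet> w) = (C *v v) \<bullet> w" using assms by simp
  also have "\<dots> = v \<bullet> (C *v w)" using sym_mat_inner_commute[OF assms(1)] .
  also have "\<dots> = b * (v \<bullet> w)" using assms by simp
  finally show ?thesis using assms(4) by simp
qed

lemma finite_eigenvalues:
  fixes C :: "real^'n^'n"
  assumes "sym_mat C"
  shows "finite (eigenvalues C)"
proof (rule ccontr)
  assume "infinite (eigenvalues C)"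
  then obtain L where L: "finite L" "card L = Suc DIM(real^'n)" "L \<subseteq> eigenvalues C"
    using infinite_arbitrarily_large by blast
  have "\<forall>l\<in>L. \<exists>v. v \<noteq> 0 \<and> C *v v = l *\<^sub>R v"
    using L(3) unfolding eigenvalues_def by blast
  then obtain vec where vec: "\<And>l. l \<in> L \<Longrightarrow> vec l \<noteq> 0 \<and> C *v vec l = l *\<^sub>R vec l"
    by metis
  have orth: "vec a \<bullet> vec b = 0" if "a \<in> L" "b \<in> L" "a \<noteq> b" for a b
    using eigenvectors_orthogonal[OF assms] vec that by blast
  have "inj_on vec L"
  proof (rule inj_onI)
    fix a b assume "a \<in> L" "b \<in> L" "vec a = vec b"
    then show "a = b" using orth[of a b] vec[of a] by auto
  qed
  moreover have "independent (vec ` L)"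
  proof (rule pairwise_orthogonal_independent)
    show "pairwise orthogonal (vec ` L)"
      unfolding pairwise_def orthogonal_def using orth by (metis imageE)
    show "0 \<notin> vec ` L" using vec by auto
  qed
  then have "card (vec ` L) \<le> DIM(real^'n)"
    using independent_bound by blast
  ultimately show False
    using card_image L(2) by (metis Suc_n_not_le_n)
qed

lemma psd_form_zero_imp_kernel:
  fixes D :: "real^'n^'n"
  assumes "sym_mat D" and psd: "\<And>w. 0 \<le> w \<bullet> (D *v w)" and "v \<bullet> (D *v v) = 0"
  shows "D *v v = 0"
proof (rule ccontr)
  define w where "w = D *v v"
  define c where "c = w \<bullet> (D *v w)"
  assume "D *v v \<noteq> 0"
  then have w_pos: "w \<bullet> w > 0" by (simp add: w_def)
  have c_nonneg: "c \<ge> 0" using psd by (simp add: c_def)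
  have expand: "(v - t *\<^sub>R w) \<bullet> (D *v (v - t *\<^sub>R w)) = t^2 * c - 2 * t * (w \<bullet> w)" for t
  proof -
    have "v \<bullet> (D *v w) = w \<bullet> w"
      using sym_mat_inner_commute[OF assms(1), of v w] by (simp add: w_def inner_commute)
    then show ?thesis
      using assms(3) by (simp add: matrix_vector_mult_diff_distrib inner_diff_left inner_diff_right
          c_def w_def power2_eq_square algebra_simps)
  qed
  define t where "t = (w \<bullet> w) / (c + 1)"
  have t_pos: "t > 0" using w_pos c_nonneg by (simp add: t_def)
  have "t * c < w \<bullet> w"
    using w_pos c_nonneg by (simp add: t_def field_simps)
  then have "t^2 * c < t * (w \<bullet> w)"
    using t_pos by (simp add: power2_eq_square mult.assoc)
  \<comment> \<open>moving from \<open>v\<close> against \<open>w = D v\<close> decreases the form to first order in \<open>t\<close>\<close>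
  moreover have "0 \<le> t^2 * c - 2 * t * (w \<bullet> w)"
    using psd[of "v - t *\<^sub>R w"] expand by simp
  moreover have "t * (w \<bullet> w) > 0" using t_pos w_pos by simp
  ultimately show False by linarith
qed

lemma quadratic_form_attains_min_on_sphere:
  fixes C :: "real^'n^'n"
  obtains v0 where "norm v0 = 1" "\<And>v. (v0 \<bullet> (C *v v0)) * (v \<bullet> v) \<le> v \<bullet> (C *v v)"
proof -
  let ?q = "\<lambda>v. v \<bullet> (C *v v)"
  have "sphere (0::real^'n) 1 \<noteq> {}" by simp
  moreover have "continuous_on (sphere 0 1) ?q" by (intro continuous_intros)
  ultimately obtain v0 where v0: "v0 \<in> sphere 0 1" "\<And>w. w \<in> sphere 0 1 \<Longrightarrow> ?q v0 \<le> ?q w"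
    using continuous_attains_inf[OF compact_sphere] by blast
  have "?q v0 * (v \<bullet> v) \<le> ?q v" for v
  proof (cases "v = 0")
    case False
    then have "?q v0 \<le> ?q ((1 / norm v) *\<^sub>R v)" by (intro v0(2)) simp
    also have "\<dots> = ?q v / (norm v)\<^sup>2"
      by (simp add: matrix_vector_mult_scaleR power2_eq_square)
    finally show ?thesis
      using False by (simp add: field_simps dot_square_norm)
  qed simp
  then show thesis using v0(1) that by simp
qed

lemma sym_mat_min_eigenvalue:
  fixes C :: "real^'n^'n"
  assumes "sym_mat C"
  obtains m where "m \<in> eigenvalues C" "\<And>v. m * (v \<bullet> v) \<le> v \<bullet> (C *v v)"
proof -
  obtain v0 where v0: "norm v0 = 1" and min: "\<And>v. (v0 \<bullet> (C *v v0)) * (v \<bullet> v) \<le> v \<bullet> (C *v v)"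
    using quadratic_form_attains_min_on_sphere[of C] by blast
  define m where "m = v0 \<bullet> (C *v v0)"
  define D where "D = C - m *\<^sub>R mat 1"
  have D_apply: "D *v v = C *v v - m *\<^sub>R v" for v
    by (simp add: D_def matrix_vector_mult_diff_rdistrib flip: scaleR_matrix_vector_assoc)
  have "D *v v0 = 0"
  proof (rule psd_form_zero_imp_kernel)
    show "sym_mat D"
      unfolding D_def using assms sym_mat_scaled_id by (rule sym_mat_diff)
    show "0 \<le> w \<bullet> (D *v w)" for w
      using min[of w] by (simp add: D_apply inner_diff_right m_def)
    show "v0 \<bullet> (D *v v0) = 0"
      using v0 by (simp add: D_apply inner_diff_right m_def dot_square_norm)
  qed
  then have "C *v v0 = m *\<^sub>R v0" by (simp add: D_apply)
  moreover have "v0 \<noteq> 0" using v0 by auto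
  ultimately have "m \<in> eigenvalues C" unfolding eigenvalues_def by blast
  then show thesis using that min m_def by blast
qed

lemma quadratic_form_lower_bound_eig_norm:
  fixes C :: "real^'n^'n"
  assumes "sym_mat C" "eig_norm C < e"
  shows "- e * (v \<bullet> v) \<le> v \<bullet> (C *v v)"
proof -
  obtain m where m: "m \<in> eigenvalues C" "\<And>v. m * (v \<bullet> v) \<le> v \<bullet> (C *v v)"
    using sym_mat_min_eigenvalue[OF assms(1)] by blast
  have "\<bar>m\<bar> \<le> eig_norm C"
    unfolding eig_norm_def using finite_eigenvalues[OF assms(1)] m(1) by (intro Max_ge) auto
  then have "- e * (v \<bullet> v) \<le> m * (v \<bullet> v)"
    using assms(2) by (intro mult_right_mono) auto
  then show ?thesis using m(2) order_trans by blast
qed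

section \<open>Upper semicontinuous functions\<close>

lemma usc_on_subset: "usc_on S f \<Longrightarrow> T \<subseteq> S \<Longrightarrow> usc_on T f"
  unfolding usc_on_def by (meson subsetD)

lemma usc_on_add_continuous:
  assumes usc: "usc_on S f" and cont: "continuous_on S g"
  shows "usc_on S (\<lambda>y. f y + g y)"
  unfolding usc_on_def
proof (intro ballI allI impI)
  fix x a assume "x \<in> S" "f x + g x < a"
  define t where "t = (a - f x - g x) / 2"
  have "t > 0" using \<open>f x + g x < a\<close> by (simp add: t_def)
  then have "f x < f x + t" by simp
  then obtain e1 where e1: "e1 > 0" "\<forall>y\<in>S. dist y x < e1 \<longrightarrow> f y < f x + t"
    using usc \<open>x \<in> S\<close> unfolding usc_on_def by blast
  obtain e2 where e2: "e2 > 0" "\<forall>y\<in>S. dist y x < e2 \<longrightarrow> dist (g y) (g x) < t"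
    using cont \<open>x \<in> S\<close> \<open>t > 0\<close> unfolding continuous_on_iff by blast
  have "f y + g y < a" if "y \<in> S" "dist y x < min e1 e2" for y
  proof -
    have "f y < f x + t" "g y < g x + t"
      using e1(2) e2(2) that by (auto simp: dist_real_def abs_less_iff)
    then show ?thesis by (simp add: t_def field_simps)
  qed
  then show "\<exists>e>0. \<forall>y\<in>S. dist y x < e \<longrightarrow> f y + g y < a"
    using e1(1) e2(1) by (intro exI[of _ "min e1 e2"]) auto
qed

lemma continuous_on_imp_usc_on:
  assumes "continuous_on S g"
  shows "usc_on S g"
proof -
  have "usc_on S (\<lambda>y. 0)" unfolding usc_on_def by auto
  from usc_on_add_continuous[OF this assms] show ?thesis by simp
qed

lemma usc_on_compact_attains_max:
  fixes f :: "real^'n \<Rightarrow> real"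
  assumes "compact K" "K \<noteq> {}" "usc_on K f"
  obtains y where "y \<in> K" "\<And>z. z \<in> K \<Longrightarrow> f z \<le> f y"
proof (rule ccontr)
  \<comment> \<open>otherwise a finite subcover yields finitely many values \<open>f (better y)\<close>, the largest of which is exceeded\<close>
  assume "\<not> thesis"
  then have "\<forall>y\<in>K. \<exists>z\<in>K. f y < f z" using that by (meson not_le)
  then obtain better where better: "\<And>y. y \<in> K \<Longrightarrow> better y \<in> K \<and> f y < f (better y)"
    by metis
  have "\<forall>y\<in>K. \<exists>r>0. \<forall>y'\<in>K. dist y' y < r \<longrightarrow> f y' < f (better y)"
    using assms(3) better unfolding usc_on_def by blast
  then obtain rad where rad: "\<And>y. y \<in> K \<Longrightarrow> rad y > 0 \<and> (\<forall>y'\<in>K. dist y' y < rad y \<longrightarrow> f y' < f (better y))"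
    by metis
  have "K \<subseteq> (\<Union>y\<in>K. ball y (rad y))" using rad by force
  then obtain F where F: "F \<subseteq> K" "finite F" "K \<subseteq> (\<Union>y\<in>F. ball y (rad y))"
    using compactE_image[OF assms(1), of K "\<lambda>y. ball y (rad y)"] by blast
  then have "F \<noteq> {}" using assms(2) by blast
  then obtain y1 where y1: "y1 \<in> F" "Max ((\<lambda>y. f (better y)) ` F) = f (better y1)"
    using obtains_MAX[OF F(2)] by blast
  have "better y1 \<in> K" using better F(1) y1(1) by blast
  then obtain y2 where "y2 \<in> F" "dist (better y1) y2 < rad y2"
    using F(3) by (auto simp: dist_commute)
  then have "f (better y1) < f (better y2)" using rad F(1) \<open>better y1 \<in> K\<close> by blast
  moreover have "f (better y2) \<le> Max ((\<lambda>y. f (better y)) ` F)"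
    using F(2) \<open>y2 \<in> F\<close> by simp
  ultimately show False using y1(2) by simp
qed

section \<open>Sup-convolution\<close>

lemma bdd_above_supconv_values:
  assumes "\<forall>y\<in>X. u y \<le> M" "\<epsilon> > 0"
  shows "bdd_above {u y - (norm (x - y))\<^sup>2 / \<epsilon> | y. y \<in> X}"
proof (rule bdd_aboveI)
  fix z assume "z \<in> {u y - (norm (x - y))\<^sup>2 / \<epsilon> | y. y \<in> X}"
  then obtain y where "y \<in> X" "z = u y - (norm (x - y))\<^sup>2 / \<epsilon>" by blast
  moreover have "(norm (x - y))\<^sup>2 / \<epsilon> \<ge> 0" using assms(2) by simp
  ultimately show "z \<le> M" using assms(1) by force
qed

lemma supconv_ge:
  assumes "\<forall>y\<in>X. u y \<le> M" "\<epsilon> > 0" "y \<in> X"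
  shows "u y - (norm (x - y))\<^sup>2 / \<epsilon> \<le> supconv X u \<epsilon> x"
  unfolding supconv_def using assms by (intro cSup_upper bdd_above_supconv_values) auto

lemma norm_diff_power2_diff_le:
  fixes x1 x2 y :: "'a::real_normed_vector"
  shows "(norm (x2 - y))\<^sup>2 - (norm (x1 - y))\<^sup>2 \<le> norm (x1 - x2) * (norm x1 + norm x2 + 2 * norm y)"
proof -
  define a where "a = norm (x2 - y)"
  define b where "b = norm (x1 - y)"
  have "a - b \<le> norm (x1 - x2)"
    using norm_triangle_ineq2[of "x2 - y" "x1 - y"] by (simp add: a_def b_def norm_minus_commute)
  moreover have "a + b \<le> norm x1 + norm x2 + 2 * norm y"
    using norm_triangle_ineq4[of x2 y] norm_triangle_ineq4[of x1 y] by (simp add: a_def b_def)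
  moreover have "a \<ge> 0" "b \<ge> 0" by (simp_all add: a_def b_def)
  ultimately have "(a - b) * (a + b) \<le> norm (x1 - x2) * (norm x1 + norm x2 + 2 * norm y)"
    by (intro mult_mono) auto
  then show ?thesis by (simp add: a_def b_def power2_eq_square algebra_simps)
qed

lemma supconv_le_supconv_plus:
  fixes X :: "(real^'n) set"
  assumes "X \<noteq> {}" "\<forall>y\<in>X. norm y \<le> R" "\<forall>y\<in>X. u y \<le> M" "\<epsilon> > 0"
  shows "supconv X u \<epsilon> x1 \<le> supconv X u \<epsilon> x2 + norm (x1 - x2) * (norm x1 + norm x2 + 2 * R) / \<epsilon>"
  unfolding supconv_def
proof (rule cSup_least)
  show "{u y - (norm (x1 - y))\<^sup>2 / \<epsilon> | y. y \<in> X} \<noteq> {}" using assms(1) by blast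
next
  let ?L = "norm (x1 - x2) * (norm x1 + norm x2 + 2 * R) / \<epsilon>"
  fix z assume "z \<in> {u y - (norm (x1 - y))\<^sup>2 / \<epsilon> | y. y \<in> X}"
  then obtain y where y: "y \<in> X" "z = u y - (norm (x1 - y))\<^sup>2 / \<epsilon>" by blast
  have "(norm (x2 - y))\<^sup>2 - (norm (x1 - y))\<^sup>2 \<le> norm (x1 - x2) * (norm x1 + norm x2 + 2 * norm y)"
    by (rule norm_diff_power2_diff_le)
  also have "\<dots> \<le> norm (x1 - x2) * (norm x1 + norm x2 + 2 * R)"
    using assms(2) y(1) by (intro mult_left_mono) auto
  finally have "(norm (x2 - y))\<^sup>2 - (norm (x1 - y))\<^sup>2 \<le> norm (x1 - x2) * (norm x1 + norm x2 + 2 * R)" .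
  then have "(norm (x2 - y))\<^sup>2 / \<epsilon> - (norm (x1 - y))\<^sup>2 / \<epsilon> \<le> ?L"
    using assms(4) by (simp add: divide_right_mono flip: diff_divide_distrib)
  then have "z \<le> u y - (norm (x2 - y))\<^sup>2 / \<epsilon> + ?L" using y(2) by simp
  also have "\<dots> \<le> Sup {u y - (norm (x2 - y))\<^sup>2 / \<epsilon> | y. y \<in> X} + ?L"
    using supconv_ge[OF assms(3,4) y(1)] unfolding supconv_def by simp
  finally show "z \<le> Sup {u y - (norm (x2 - y))\<^sup>2 / \<epsilon> | y. y \<in> X} + ?L" .
qed

lemma continuous_on_supconv:
  fixes X :: "(real^'n) set"
  assumes "bounded X" "\<forall>y\<in>X. u y \<le> M" "\<epsilon> > 0"
  shows "continuous_on S (supconv X u \<epsilon>)"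
proof (cases "X = {}")
  case True
  then show ?thesis by (simp add: supconv_def)
next
  case False
  obtain R where R: "\<forall>y\<in>X. norm y \<le> R" using assms(1) unfolding bounded_iff by blast
  have "isCont (supconv X u \<epsilon>) x" for x
  proof -
    let ?L = "\<lambda>x'. norm (x' - x) * (norm x' + norm x + 2 * R) / \<epsilon>"
    have bound: "norm (supconv X u \<epsilon> x' - supconv X u \<epsilon> x) \<le> ?L x'" for x'
    proof -
      have "supconv X u \<epsilon> x' \<le> supconv X u \<epsilon> x + ?L x'"
        by (rule supconv_le_supconv_plus[OF False R assms(2,3)])
      moreover have "supconv X u \<epsilon> x \<le> supconv X u \<epsilon> x' + ?L x'"
        using supconv_le_supconv_plus[OF False R assms(2,3), of x x']
        by (simp add: norm_minus_commute add.commute)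
      ultimately show ?thesis by (simp add: abs_le_iff)
    qed
    have "isCont ?L x"
      by (rule continuous_intros)+ (use assms(3) in auto)
    then have "(?L \<longlongrightarrow> 0) (at x)" by (simp add: isCont_def)
    then have "((\<lambda>x'. supconv X u \<epsilon> x' - supconv X u \<epsilon> x) \<longlongrightarrow> 0) (at x)"
      by (rule Lim_null_comparison[OF always_eventually[OF allI[OF bound]]])
    then show ?thesis unfolding isCont_def by (simp add: LIM_zero_iff)
  qed
  then show ?thesis by (simp add: continuous_at_imp_continuous_on)
qed

lemma cball_subset_if_infdist_frontier:
  fixes X :: "(real^'n) set"
  assumes "x \<in> X" "d < infdist x (frontier X)"
  shows "cball x d \<subseteq> X"
proof (rule ccontr)
  assume "\<not> cball x d \<subseteq> X"
  moreover from this have "x \<in> cball x d" by (cases "0 \<le> d") auto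
  ultimately have "cball x d \<inter> frontier X \<noteq> {}"
    using connected_Int_frontier[OF connected_cball] assms(1) by blast
  then obtain b where "b \<in> frontier X" "dist x b \<le> d" by auto
  then show False using infdist_le[of b "frontier X" x] assms(2) by simp
qed

lemma supconv_attained:
  fixes X :: "(real^'n) set"
  assumes usc: "usc_on X u" and bound: "\<forall>y\<in>X. \<bar>u y\<bar> \<le> M" and "\<epsilon> > 0" "x \<in> X"
    and ball_X: "cball x (sqrt (2 * \<epsilon> * M)) \<subseteq> X"
  obtains y where "y \<in> X" "dist x y \<le> sqrt (2 * \<epsilon> * M)"
    "supconv X u \<epsilon> x = u y - (norm (x - y))\<^sup>2 / \<epsilon>"
proof -
  define d where "d = sqrt (2 * \<epsilon> * M)"
  define F where "F = (\<lambda>y. u y - (norm (x - y))\<^sup>2 / \<epsilon>)"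
  have "M \<ge> 0" using bound \<open>x \<in> X\<close> by force
  then have d: "d \<ge> 0" "d\<^sup>2 = 2 * \<epsilon> * M" using \<open>\<epsilon> > 0\<close> by (simp_all add: d_def)
  have "usc_on (cball x d) u" using usc ball_X by (simp add: d_def usc_on_subset)
  moreover have "continuous_on (cball x d) (\<lambda>y. - (norm (x - y))\<^sup>2 / \<epsilon>)"
    by (intro continuous_intros) (use \<open>\<epsilon> > 0\<close> in simp)
  ultimately have "usc_on (cball x d) (\<lambda>y. u y + - (norm (x - y))\<^sup>2 / \<epsilon>)"
    by (rule usc_on_add_continuous)
  then have "usc_on (cball x d) F" by (simp add: F_def)
  then obtain y0 where y0: "y0 \<in> cball x d" "\<And>z. z \<in> cball x d \<Longrightarrow> F z \<le> F y0"
    using usc_on_compact_attains_max[OF compact_cball] d(1) by (metis cball_eq_empty not_less)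
  have F_le: "F y \<le> F y0" if "y \<in> X" for y
  proof (cases "y \<in> cball x d")
    case False
    then have "d\<^sup>2 < (norm (x - y))\<^sup>2"
      using d(1) by (simp add: dist_norm power_strict_mono)
    then have "2 * M < (norm (x - y))\<^sup>2 / \<epsilon>"
      using d(2) \<open>\<epsilon> > 0\<close> by (simp add: field_simps)
    then have "F y < - M" using bound that by (force simp: F_def)
    also have "- M \<le> F x" using bound \<open>x \<in> X\<close> by (force simp: F_def)
    also have "F x \<le> F y0" using y0(2) d(1) by simp
    finally show ?thesis by simp
  qed (use y0 in blast)
  have "supconv X u \<epsilon> x = F y0"
    unfolding supconv_def
  proof (rule cSup_eq_maximum)
    show "F y0 \<in> {u y - (norm (x - y))\<^sup>2 / \<epsilon> | y. y \<in> X}"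
      using y0(1) ball_X by (force simp: F_def d_def)
  qed (use F_le in \<open>force simp: F_def\<close>)
  then show thesis
    using that y0(1) ball_X by (force simp: F_def d_def)
qed

section \<open>Superjets\<close>

lemma superjetI:
  assumes "e > 0"
    and "\<And>y. y \<in> ball x0 e \<Longrightarrow> (\<phi> has_derivative (\<lambda>h. g y \<bullet> h)) (at y)"
    and "\<And>y. y \<in> ball x0 e \<Longrightarrow> (g has_derivative (\<lambda>h. H y *v h)) (at y)"
    and "continuous_on (ball x0 e) H"
    and "\<And>y. y \<in> ball x0 e \<Longrightarrow> w y \<le> \<phi> y" and "w x0 = \<phi> x0"
  shows "(\<phi> x0, H x0) \<in> superjet w x0"
  unfolding superjet_def using assms by blast

lemma superjetE:
  assumes "(r, A) \<in> superjet w x0"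
  obtains \<phi> g H e where "r = \<phi> x0" "A = H x0" "e > 0"
    "\<And>y. y \<in> ball x0 e \<Longrightarrow> (\<phi> has_derivative (\<lambda>h. g y \<bullet> h)) (at y)"
    "\<And>y. y \<in> ball x0 e \<Longrightarrow> (g has_derivative (\<lambda>h. H y *v h)) (at y)"
    "continuous_on (ball x0 e) H"
    "\<And>y. y \<in> ball x0 e \<Longrightarrow> w y \<le> \<phi> y" "w x0 = \<phi> x0"
  using assms unfolding superjet_def by blast

lemma superjet_value: "(r, A) \<in> superjet w x0 \<Longrightarrow> r = w x0"
  by (erule superjetE) simp

lemma superjet_translate:
  assumes "(r, A) \<in> superjet w (y0 + z)" "e > 0"
    and le: "\<And>y. y \<in> ball y0 e \<Longrightarrow> u y \<le> w (y + z) + c" and eq: "u y0 = w (y0 + z) + c"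
  shows "(r + c, A) \<in> superjet u y0"
proof -
  obtain \<phi> g H e' where jet: "r = \<phi> (y0 + z)" "A = H (y0 + z)" "e' > 0"
    and d\<phi>: "\<And>y. y \<in> ball (y0 + z) e' \<Longrightarrow> (\<phi> has_derivative (\<lambda>h. g y \<bullet> h)) (at y)"
    and dg: "\<And>y. y \<in> ball (y0 + z) e' \<Longrightarrow> (g has_derivative (\<lambda>h. H y *v h)) (at y)"
    and H: "continuous_on (ball (y0 + z) e') H"
    and touch: "\<And>y. y \<in> ball (y0 + z) e' \<Longrightarrow> w y \<le> \<phi> y" "w (y0 + z) = \<phi> (y0 + z)"
    using superjetE[OF assms(1)] by metis
  define \<rho> where "\<rho> = min e e'"
  have shift: "y + z \<in> ball (y0 + z) e'" if "y \<in> ball y0 \<rho>" for y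
    using that by (simp add: \<rho>_def dist_norm)
  have tr: "((\<lambda>y. y + z) has_derivative (\<lambda>h. h)) (at y)" for y
    by (auto intro!: derivative_eq_intros)
  have "(\<phi> (y0 + z) + c, H (y0 + z)) \<in> superjet u y0"
  proof (rule superjetI[where \<phi> = "\<lambda>y. \<phi> (y + z) + c" and H = "\<lambda>y. H (y + z)"])
    show "\<rho> > 0" using assms(2) jet(3) by (simp add: \<rho>_def)
    show "((\<lambda>y. \<phi> (y + z) + c) has_derivative (\<lambda>h. g (y + z) \<bullet> h)) (at y)" if "y \<in> ball y0 \<rho>" for y
      using has_derivative_compose[OF tr d\<phi>[OF shift[OF that]]] by (auto intro!: derivative_eq_intros)
    show "((\<lambda>y. g (y + z)) has_derivative (\<lambda>h. H (y + z) *v h)) (at y)" if "y \<in> ball y0 \<rho>" for y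
      using has_derivative_compose[OF tr dg[OF shift[OF that]]] by simp
    show "continuous_on (ball y0 \<rho>) (\<lambda>y. H (y + z))"
      by (rule continuous_on_compose2[OF H]) (auto intro!: continuous_intros shift)
    show "u y \<le> \<phi> (y + z) + c" if "y \<in> ball y0 \<rho>" for y
      using le[of y] touch(1)[OF shift[OF that]] that by (simp add: \<rho>_def)
    show "u y0 = \<phi> (y0 + z) + c" using eq touch(2) by simp
  qed
  then show ?thesis using jet by simp
qed

lemma superjet_add_quadratic:
  fixes w :: "real^'n \<Rightarrow> real"
  assumes "(r, A) \<in> superjet (\<lambda>x. w x + \<eta> * ((norm x)\<^sup>2 - \<omega>)) x0"
  shows "(r - \<eta> * ((norm x0)\<^sup>2 - \<omega>), A - (2 * \<eta>) *\<^sub>R mat 1) \<in> superjet w x0"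
proof -
  obtain \<phi> g H e where jet: "r = \<phi> x0" "A = H x0" "e > 0"
    and d\<phi>: "\<And>y. y \<in> ball x0 e \<Longrightarrow> (\<phi> has_derivative (\<lambda>h. g y \<bullet> h)) (at y)"
    and dg: "\<And>y. y \<in> ball x0 e \<Longrightarrow> (g has_derivative (\<lambda>h. H y *v h)) (at y)"
    and H: "continuous_on (ball x0 e) H"
    and touch: "\<And>y. y \<in> ball x0 e \<Longrightarrow> w y + \<eta> * ((norm y)\<^sup>2 - \<omega>) \<le> \<phi> y"
      "w x0 + \<eta> * ((norm x0)\<^sup>2 - \<omega>) = \<phi> x0"
    using superjetE[OF assms] by metis
  let ?\<phi> = "\<lambda>x. \<phi> x - \<eta> * (x \<bullet> x - \<omega>)"
  let ?g = "\<lambda>x. g x - (2 * \<eta>) *\<^sub>R x"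
  let ?H = "\<lambda>x. H x - (2 * \<eta>) *\<^sub>R mat 1"
  have "(?\<phi> x0, ?H x0) \<in> superjet w x0"
  proof (rule superjetI[OF \<open>e > 0\<close>])
    show "(?\<phi> has_derivative (\<lambda>h. ?g y \<bullet> h)) (at y)" if "y \<in> ball x0 e" for y
      by (rule derivative_eq_intros d\<phi>[OF that] refl)+
         (simp add: fun_eq_iff inner_diff_right inner_commute algebra_simps)
    show "(?g has_derivative (\<lambda>h. ?H y *v h)) (at y)" if "y \<in> ball x0 e" for y
      by (rule derivative_eq_intros dg[OF that] refl)+
         (simp add: fun_eq_iff matrix_vector_mult_diff_rdistrib flip: scaleR_matrix_vector_assoc)
    show "continuous_on (ball x0 e) ?H" using H by (intro continuous_intros)
    show "w y \<le> ?\<phi> y" if "y \<in> ball x0 e" for y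
      using touch(1)[OF that] by (simp add: power2_norm_eq_inner)
    show "w x0 = ?\<phi> x0" using touch(2) by (simp add: power2_norm_eq_inner)
  qed
  then show ?thesis using jet by (simp add: power2_norm_eq_inner)
qed

lemma superjet_supconv_at_maximizer:
  fixes X :: "(real^'n) set"
  assumes "open X" "y0 \<in> X" "\<forall>y\<in>X. u y \<le> M" "\<epsilon> > 0"
    and max: "supconv X u \<epsilon> x0 = u y0 - (norm (x0 - y0))\<^sup>2 / \<epsilon>"
    and jet: "(r, A) \<in> superjet (supconv X u \<epsilon>) x0"
  shows "(r + (norm (x0 - y0))\<^sup>2 / \<epsilon>, A) \<in> superjet u y0"
proof -
  define z where "z = x0 - y0"
  obtain e where "e > 0" "ball y0 e \<subseteq> X"
    using assms(1,2) open_contains_ball by blast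
  show ?thesis
  proof (rule superjet_translate[where z = z])
    show "(r, A) \<in> superjet (supconv X u \<epsilon>) (y0 + z)" using jet by (simp add: z_def)
    show "e > 0" by fact
    show "u y \<le> supconv X u \<epsilon> (y + z) + (norm (x0 - y0))\<^sup>2 / \<epsilon>" if "y \<in> ball y0 e" for y
      using supconv_ge[OF assms(3,4), of y "y + z"] that \<open>ball y0 e \<subseteq> X\<close> by (auto simp: z_def)
    show "u y0 = supconv X u \<epsilon> (y0 + z) + (norm (x0 - y0))\<^sup>2 / \<epsilon>"
      using max by (simp add: z_def)
  qed
qed

section \<open>Proper elliptic maps\<close>

lemma hausdorff_dist_less_obtains:
  assumes "a \<in> S" "hausdorff_dist S T < ereal \<eta>"
  obtains b where "b \<in> T" "jet_norm (a - b) < \<eta>"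
proof -
  have "(INF b\<in>T. ereal (jet_norm (a - b))) \<le> (SUP a\<in>S. INF b\<in>T. ereal (jet_norm (a - b)))"
    using assms(1) by (rule SUP_upper)
  also have "\<dots> \<le> hausdorff_dist S T" unfolding hausdorff_dist_def by simp
  finally have "(INF b\<in>T. ereal (jet_norm (a - b))) < ereal \<eta>" using assms(2) by simp
  then show thesis using that by (auto simp: INF_less_iff)
qed

lemma scaled_id_in_Qcone: "s \<le> 0 \<Longrightarrow> c \<ge> 0 \<Longrightarrow> (s, c *\<^sub>R mat 1) \<in> Qcone"
  by (simp add: Qcone_def sym_mat_scaled_id mat_le_def flip: scaleR_matrix_vector_assoc)

lemma jet_shift_mem_if_near:
  fixes T :: "(real \<times> (real^'n^'n)) set"
  assumes cone: "\<forall>p\<in>T. \<forall>q\<in>Qcone. p + q \<in> T"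
    and "(s, B) \<in> T" "sym_mat B" "sym_mat A" "jet_norm ((r, A) - (s, B)) < \<eta>"
  shows "(r - \<eta>, A + \<eta> *\<^sub>R mat 1) \<in> T"
proof -
  have r: "r - \<eta> - s \<le> 0" and eig: "eig_norm (A - B) < \<eta>"
    using assms(5) by (auto simp: jet_norm_def)
  have "(r - \<eta> - s, A + \<eta> *\<^sub>R mat 1 - B) \<in> Qcone"
    unfolding Qcone_def mem_Collect_eq case_prod_conv
  proof (intro conjI r)
    show "sym_mat (A + \<eta> *\<^sub>R mat 1 - B)"
      using sym_mat_diff[OF sym_mat_add[OF assms(4) sym_mat_scaled_id] assms(3)] .
    show "mat_le 0 (A + \<eta> *\<^sub>R mat 1 - B)"
      unfolding mat_le_def
    proof
      fix v :: "real^'n"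
      have "v \<bullet> ((A + \<eta> *\<^sub>R mat 1 - B) *v v) = v \<bullet> ((A - B) *v v) + \<eta> * (v \<bullet> v)"
        by (simp add: matrix_vector_mult_diff_rdistrib matrix_vector_mult_add_rdistrib
            inner_add_right inner_diff_right flip: scaleR_matrix_vector_assoc)
      moreover have "- \<eta> * (v \<bullet> v) \<le> v \<bullet> ((A - B) *v v)"
        by (rule quadratic_form_lower_bound_eig_norm[OF sym_mat_diff[OF assms(4,3)] eig])
      ultimately show "v \<bullet> (0 *v v) \<le> v \<bullet> ((A + \<eta> *\<^sub>R mat 1 - B) *v v)" by simp
    qed
  qed
  then have "(s, B) + (r - \<eta> - s, A + \<eta> *\<^sub>R mat 1 - B) \<in> T"
    using cone assms(2) by blast
  then show ?thesis by simp
qed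

lemma superjet_perturbed_supconv_subset:
  fixes X :: "(real^'n) set" and Theta :: "real^'n \<Rightarrow> (real \<times> (real^'n^'n)) set"
  assumes "open X" and elliptic: "proper_elliptic_map X Theta" and sub: "subharmonic Theta X u"
    and "\<forall>y\<in>X. u y \<le> M" "\<epsilon> > 0" "\<eta> > 0" "x0 \<in> X" "y0 \<in> X"
    and max: "supconv X u \<epsilon> x0 = u y0 - (norm (x0 - y0))\<^sup>2 / \<epsilon>"
    and close: "hausdorff_dist (Theta y0) (Theta x0) < ereal \<eta>"
    and \<omega>: "(norm x0)\<^sup>2 + 1 \<le> \<omega>"
  shows "superjet (\<lambda>x. supconv X u \<epsilon> x + \<eta> * ((norm x)\<^sup>2 - \<omega>)) x0 \<subseteq> Theta x0"
proof
  fix j assume j: "j \<in> superjet (\<lambda>x. supconv X u \<epsilon> x + \<eta> * ((norm x)\<^sup>2 - \<omega>)) x0"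
  obtain r A where j_eq: "j = (r, A)" by fastforce
  let ?q = "\<eta> * ((norm x0)\<^sup>2 - \<omega>)" and ?A' = "A - (2 * \<eta>) *\<^sub>R mat 1"
  have r: "r = u y0 - (norm (x0 - y0))\<^sup>2 / \<epsilon> + ?q"
    using superjet_value[OF j[unfolded j_eq]] max by simp
  have "(r - ?q, ?A') \<in> superjet (supconv X u \<epsilon>) x0"
    using superjet_add_quadratic j by (simp add: j_eq)
  then have "(u y0, ?A') \<in> superjet u y0"
    using superjet_supconv_at_maximizer[OF assms(1,8,4,5) max] r by fastforce
  then have in_y0: "(u y0, ?A') \<in> Theta y0"
    using sub \<open>y0 \<in> X\<close> by (auto simp: subharmonic_def)
  then obtain s B where "(s, B) \<in> Theta x0" "jet_norm ((u y0, ?A') - (s, B)) < \<eta>"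
    using hausdorff_dist_less_obtains[OF _ close] by (metis surj_pair)
  moreover have "Theta y0 \<subseteq> {(r, A). sym_mat A}" "Theta x0 \<subseteq> {(r, A). sym_mat A}"
    and cone: "\<forall>p\<in>Theta x0. \<forall>q\<in>Qcone. p + q \<in> Theta x0"
    using elliptic \<open>x0 \<in> X\<close> \<open>y0 \<in> X\<close> unfolding proper_elliptic_map_def by blast+
  ultimately have "(u y0 - \<eta>, ?A' + \<eta> *\<^sub>R mat 1) \<in> Theta x0"
    using jet_shift_mem_if_near[OF cone] in_y0 by blast
  moreover have "(r - (u y0 - \<eta>), \<eta> *\<^sub>R mat 1) \<in> Qcone"
  proof (rule scaled_id_in_Qcone)
    have "?q \<le> \<eta> * (- 1)" using \<omega> \<open>\<eta> > 0\<close> by (intro mult_left_mono) auto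
    moreover have "(norm (x0 - y0))\<^sup>2 / \<epsilon> \<ge> 0" using \<open>\<epsilon> > 0\<close> by simp
    ultimately show "r - (u y0 - \<eta>) \<le> 0" using r by linarith
  qed (use \<open>\<eta> > 0\<close> in simp)
  ultimately have "(u y0 - \<eta>, ?A' + \<eta> *\<^sub>R mat 1) + (r - (u y0 - \<eta>), \<eta> *\<^sub>R mat 1) \<in> Theta x0"
    using cone by blast
  moreover have "?A' + \<eta> *\<^sub>R mat 1 + \<eta> *\<^sub>R mat 1 = A" by (simp add: vec_eq_iff)
  ultimately show "j \<in> Theta x0" by (simp add: j_eq)
qed

lemma norm_power2_le_Sup:
  fixes X :: "'a::real_normed_vector set"
  assumes "bounded X" "x \<in> X"
  shows "(norm x)\<^sup>2 \<le> Sup ((\<lambda>x. (norm x)\<^sup>2) ` X)"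
proof (rule cSup_upper)
  obtain R where "\<forall>y\<in>X. norm y \<le> R" using assms(1) unfolding bounded_iff by blast
  then show "bdd_above ((\<lambda>x. (norm x)\<^sup>2) ` X)"
    by (intro bdd_aboveI[of _ "R\<^sup>2"]) (auto intro: power_mono)
qed (use assms(2) in simp)

lemma subharmonic_perturbed_supconv:
  fixes X :: "(real^'n) set" and Theta :: "real^'n \<Rightarrow> (real \<times> (real^'n^'n)) set"
  assumes "bounded X" "open X" "proper_elliptic_map X Theta" "subharmonic Theta X u"
    and bound: "\<forall>x\<in>X. \<bar>u x\<bar> \<le> M" and "\<epsilon> > 0" "\<eta> > 0"
    and close: "\<And>x y. x \<in> X \<Longrightarrow> y \<in> X \<Longrightarrow> dist x y \<le> sqrt (2 * \<epsilon> * M) \<Longrightarrow>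
      hausdorff_dist (Theta y) (Theta x) < ereal \<eta>"
    and \<omega>: "\<And>x. x \<in> X \<Longrightarrow> (norm x)\<^sup>2 + 1 \<le> \<omega>"
  shows "subharmonic Theta {x\<in>X. infdist x (frontier X) > sqrt (2 * \<epsilon> * M)}
    (\<lambda>x. supconv X u \<epsilon> x + \<eta> * ((norm x)\<^sup>2 - \<omega>))"
proof -
  have u_le: "\<forall>y\<in>X. u y \<le> M" using bound by force
  have usc: "usc_on X u" using assms(4) by (simp add: subharmonic_def)
  show ?thesis
    unfolding subharmonic_def
  proof (intro conjI ballI)
    show "usc_on {x\<in>X. infdist x (frontier X) > sqrt (2 * \<epsilon> * M)}
        (\<lambda>x. supconv X u \<epsilon> x + \<eta> * ((norm x)\<^sup>2 - \<omega>))"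
      using continuous_on_supconv[OF assms(1) u_le \<open>\<epsilon> > 0\<close>]
      by (intro continuous_on_imp_usc_on continuous_intros)
  next
    fix x0 assume "x0 \<in> {x\<in>X. infdist x (frontier X) > sqrt (2 * \<epsilon> * M)}"
    then have "x0 \<in> X" "cball x0 (sqrt (2 * \<epsilon> * M)) \<subseteq> X"
      using cball_subset_if_infdist_frontier by auto
    then obtain y0 where "y0 \<in> X" "dist x0 y0 \<le> sqrt (2 * \<epsilon> * M)"
      and max: "supconv X u \<epsilon> x0 = u y0 - (norm (x0 - y0))\<^sup>2 / \<epsilon>"
      using supconv_attained[OF usc bound \<open>\<epsilon> > 0\<close>] by blast
    then show "superjet (\<lambda>x. supconv X u \<epsilon> x + \<eta> * ((norm x)\<^sup>2 - \<omega>)) x0 \<subseteq> Theta x0"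
      using superjet_perturbed_supconv_subset[OF assms(2,3,4) u_le \<open>\<epsilon> > 0\<close> \<open>\<eta> > 0\<close>
          \<open>x0 \<in> X\<close> \<open>y0 \<in> X\<close> max close \<omega>] \<open>x0 \<in> X\<close>
      by blast
  qed
qed

lemma subharmonic_perturbed_supconv_small_eps:
  fixes X :: "(real^'n) set" and Theta :: "real^'n \<Rightarrow> (real \<times> (real^'n^'n)) set"
  assumes "bounded X" "open X" "proper_elliptic_map X Theta" "unif_cont_elliptic_map X Theta"
    and "subharmonic Theta X u" "M > 0" "\<forall>x\<in>X. \<bar>u x\<bar> \<le> M"
    and \<omega>: "\<And>x. x \<in> X \<Longrightarrow> (norm x)\<^sup>2 + 1 \<le> \<omega>"
  shows "\<forall>\<eta>>0. \<exists>\<epsilon>0>0. \<forall>\<epsilon>. 0 < \<epsilon> \<and> \<epsilon> \<le> \<epsilon>0 \<longrightarrow>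
           subharmonic Theta {x\<in>X. infdist x (frontier X) > sqrt (2 * \<epsilon> * M)}
             (\<lambda>x. supconv X u \<epsilon> x + \<eta> * ((norm x)\<^sup>2 - \<omega>))"
    (is "\<forall>\<eta>>0. \<exists>\<epsilon>0>0. \<forall>\<epsilon>. _ \<longrightarrow> ?subharmonic \<eta> \<epsilon>")
proof (intro allI impI)
  fix \<eta> :: real assume "\<eta> > 0"
  then obtain \<delta> where "\<delta> > 0"
    and \<delta>: "\<And>x y. x \<in> X \<Longrightarrow> y \<in> X \<Longrightarrow> dist x y < \<delta> \<Longrightarrow> hausdorff_dist (Theta x) (Theta y) < ereal \<eta>"
    using assms(4) unfolding unif_cont_elliptic_map_def by blast
  show "\<exists>\<epsilon>0>0. \<forall>\<epsilon>. 0 < \<epsilon> \<and> \<epsilon> \<le> \<epsilon>0 \<longrightarrow> ?subharmonic \<eta> \<epsilon>"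
  proof (intro exI[of _ "\<delta>\<^sup>2 / (4 * M)"] conjI allI impI)
    show "\<delta>\<^sup>2 / (4 * M) > 0" using \<open>\<delta> > 0\<close> \<open>M > 0\<close> by simp
    fix \<epsilon> assume \<epsilon>: "0 < \<epsilon> \<and> \<epsilon> \<le> \<delta>\<^sup>2 / (4 * M)"
    have "2 * \<epsilon> * M < 4 * \<epsilon> * M" using \<epsilon> \<open>M > 0\<close> by simp
    also have "\<dots> \<le> \<delta>\<^sup>2" using \<epsilon> \<open>M > 0\<close> by (simp add: field_simps)
    finally have "sqrt (2 * \<epsilon> * M) < \<delta>" using \<open>\<delta> > 0\<close> real_less_lsqrt by force
    then show "?subharmonic \<eta> \<epsilon>"
      using subharmonic_perturbed_supconv[OF assms(1,2,3,5,7) _ \<open>\<eta> > 0\<close> _ \<omega>] \<delta> \<epsilon>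
      by (simp add: dist_commute)
  qed
qed

theorem lemma5p6:
  fixes X :: "(real^'n) set" and Theta :: "real^'n \<Rightarrow> (real \<times> (real^'n^'n)) set"
    and u :: "real^'n \<Rightarrow> real" and M :: real
  assumes "bounded X" and "open X"
    and "proper_elliptic_map X Theta" and "unif_cont_elliptic_map X Theta"
    and "usc_on (closure X) u"
    and "subharmonic Theta X u"
    and "M > 0" and "\<forall>x\<in>X. \<bar>u x\<bar> \<le> M"
  shows "\<forall>\<eta>>0. \<exists>\<epsilon>0>0. \<forall>\<epsilon>. 0 < \<epsilon> \<and> \<epsilon> \<le> \<epsilon>0 \<longrightarrow>
           subharmonic Theta {x\<in>X. infdist x (frontier X) > sqrt (2 * \<epsilon> * M)}
             (\<lambda>x. supconv X u \<epsilon> x + \<eta> * ((norm x)\<^sup>2 - (2 + Sup ((\<lambda>x. (norm x)\<^sup>2) ` X))))"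
proof (rule subharmonic_perturbed_supconv_small_eps[OF assms(1-4,6-8)])
  show "(norm x)\<^sup>2 + 1 \<le> 2 + Sup ((\<lambda>x. (norm x)\<^sup>2) ` X)" if "x \<in> X" for x
    using norm_power2_le_Sup[OF assms(1) that] by simp
qed

end
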